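(* Assume the hypotheses of the following statement with, in addition, $\bar u<0$: $a,b\in C^1(\mathbb{R})$, $a>0$, and there is $\bar u<0$ with $-\infty<\inf_{\mathbb{R}} b<\inf_{u\ge\bar u}b(u)$; for each $T>0$ let $u_T$ be a minimizer of $F_T$ over $U_T$. Then for all sufficiently large $T$ there exists $x\in[0,T-1]$ with $\int_x^{x+1}u_T(s)\,ds<0$.
   Context: For $T>0$, $U_T=\{1+v: v\in H^1_0(0,T)\}$ and $F_T(u)=\int_0^T\bigl[a(u)(u')^2+b(u)\bigr]\,dx$. No contact constraint is imposed in the minimization. *)

theory Defs
  imports "HOL-Analysis.Analysis"
begin

text \<open>H^1_0(0,T) in one dimension, via the continuous representative:
  v(x) = integral of its weak derivative g over [0,x], with g in L^2(0,T), and v(T) = 0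
  (v(0) = 0 is automatic).\<close>
definition H10 :: "real \<Rightarrow> (real \<Rightarrow> real) \<Rightarrow> (real \<Rightarrow> real) \<Rightarrow> bool" where
  "H10 T v g \<longleftrightarrow>
     g \<in> borel_measurable lborel \<and>
     set_integrable lborel {0..T} g \<and>
     set_integrable lborel {0..T} (\<lambda>x. (g x)\<^sup>2) \<and>
     (\<forall>x\<in>{0..T}. v x = (LINT s:{0..x}|lborel. g s)) \<and>
     v T = 0"

definition FT :: "(real \<Rightarrow> real) \<Rightarrow> (real \<Rightarrow> real) \<Rightarrow> real \<Rightarrow> (real \<Rightarrow> real) \<Rightarrow> (real \<Rightarrow> real) \<Rightarrow> real" where
  "FT a b T u g = (LINT x:{0..T}|lborel. a (u x) * (g x)\<^sup>2 + b (u x))"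

text \<open>u is a minimizer of F_T over U_T = {1 + v : v \<in> H^1_0(0,T)} (only values on [0,T] matter).\<close>
definition is_minimizer :: "(real \<Rightarrow> real) \<Rightarrow> (real \<Rightarrow> real) \<Rightarrow> real \<Rightarrow> (real \<Rightarrow> real) \<Rightarrow> bool" where
  "is_minimizer a b T u \<longleftrightarrow>
     (\<exists>v g. H10 T v g \<and> (\<forall>x\<in>{0..T}. u x = 1 + v x) \<and>
        (\<forall>w h. H10 T w h \<longrightarrow> FT a b T u g \<le> FT a b T (\<lambda>x. 1 + w x) h))"

end

theory Submission
  imports Defs
begin

(* Suppose every unit window of u = u_T has nonnegative mean. On a window where u >= ubar
   throughout, the potential term alone costs at least m + eta, where m = inf b and
   inf {b y | y >= ubar} >= m + eta. Otherwise u takes a nonnegative value and a value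
   below ubar in the window, so it crosses the strip [ubar, 0] on a subinterval of length
   at most 1, and by Cauchy-Schwarz the gradient term there costs at least
   (min of a on [ubar, 0]) * ubar^2 >= eta. Summing over windows,
   F_T(u) >= m T + eta (T - 1). But u is a minimizer, and the competitor that ramps linearly
   from 1 down to a point u0 with b u0 < m + eta, stays there, and ramps back costs only
   C + b u0 (T - 2), which is smaller for large T. *)

lemma set_integrable_bounded_Icc:
  fixes f :: "real \<Rightarrow> real"
  assumes "f \<in> borel_measurable borel" and "\<forall>x\<in>{c..d}. \<bar>f x\<bar> \<le> M"
  shows "set_integrable lborel {c..d} f"
proof (rule set_integrable_bound)
  show "set_integrable lborel {c..d} (\<lambda>_. M)"
    unfolding set_integrable_def by (rule borel_integrable_compact) auto
  show "set_borel_measurable lborel {c..d} f"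
    using assms(1) unfolding set_borel_measurable_def by measurable
  show "AE x in lborel. x \<in> {c..d} \<longrightarrow> norm (f x) \<le> norm M"
    using assms(2) by (intro AE_I2) force
qed

lemma H10_integrable_on:
  assumes "H10 T v g"
  shows "g integrable_on {0..T}" and "(\<lambda>x. (g x)\<^sup>2) integrable_on {0..T}"
  using assms unfolding H10_def by (auto intro: set_borel_integral_eq_integral(1))

lemma H10_eq_integral:
  assumes "H10 T v g" and "x \<in> {0..T}"
  shows "v x = integral {0..x} g"
proof -
  have "set_integrable lborel {0..x} g"
    using assms set_integrable_subset[of lborel "{0..T}" g "{0..x}"] unfolding H10_def by auto
  then show ?thesis
    using assms set_borel_integral_eq_integral(2) unfolding H10_def by metis
qed

lemma H10_diff_eq_integral:
  assumes "H10 T v g" and "0 \<le> p" "p \<le> q" "q \<le> T"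
  shows "v q - v p = integral {p..q} g"
proof -
  have "g integrable_on {0..q}"
    using H10_integrable_on(1)[OF assms(1)] by (rule integrable_on_subinterval) (use assms in auto)
  then have "integral {0..p} g + integral {p..q} g = integral {0..q} g"
    using assms by (intro Henstock_Kurzweil_Integration.integral_combine) auto
  then show ?thesis
    using assms H10_eq_integral[OF assms(1)] by auto
qed

lemma H10_continuous_on_shift:
  assumes "H10 T v g" and "\<forall>x\<in>{0..T}. u x = 1 + v x"
  shows "continuous_on {0..T} u"
proof (rule continuous_on_eq)
  show "continuous_on {0..T} (\<lambda>x. 1 + integral {0..x} g)"
    by (intro continuous_intros indefinite_integral_continuous_1 H10_integrable_on(1)[OF assms(1)])
qed (use assms H10_eq_integral in simp)

lemma Lagrangian_set_integrable:
  fixes a b u :: "real \<Rightarrow> real"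
  assumes "H10 T v g" and "continuous_on UNIV a" "continuous_on UNIV b"
    and "continuous_on {0..T} u"
  shows "set_integrable lborel {0..T} (\<lambda>x. a (u x) * (g x)\<^sup>2)"
    and "set_integrable lborel {0..T} (\<lambda>x. b (u x))"
proof -
  have au: "continuous_on {0..T} (\<lambda>x. a (u x))" and bu: "continuous_on {0..T} (\<lambda>x. b (u x))"
    using assms(2-4) by (auto intro: continuous_on_compose2)
  obtain M where M: "\<forall>x\<in>{0..T}. \<bar>a (u x)\<bar> \<le> M"
    using compact_imp_bounded[OF compact_continuous_image[OF au compact_Icc]]
    unfolding bounded_real by auto
  show "set_integrable lborel {0..T} (\<lambda>x. a (u x) * (g x)\<^sup>2)"
  proof (rule set_integrable_bound)
    show "set_integrable lborel {0..T} (\<lambda>x. M * (g x)\<^sup>2)"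
      using assms(1) unfolding H10_def by simp
    have "(\<lambda>x. indicator {0..T} x *\<^sub>R a (u x)) \<in> borel_measurable borel"
      by (rule borel_measurable_continuous_on_indicator[OF _ au]) simp
    moreover have "g \<in> borel_measurable borel"
      using assms(1) unfolding H10_def by simp
    ultimately have "(\<lambda>x. (indicator {0..T} x *\<^sub>R a (u x)) * (g x)\<^sup>2) \<in> borel_measurable borel"
      by measurable
    then show "set_borel_measurable lborel {0..T} (\<lambda>x. a (u x) * (g x)\<^sup>2)"
      unfolding set_borel_measurable_def by (simp add: mult.assoc)
    show "AE x in lborel. x \<in> {0..T} \<longrightarrow> norm (a (u x) * (g x)\<^sup>2) \<le> norm (M * (g x)\<^sup>2)"
    proof (intro AE_I2 impI)
      fix x assume "x \<in> {0..T}"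
      then have "\<bar>a (u x)\<bar> \<le> \<bar>M\<bar>"
        using M by force
      then show "norm (a (u x) * (g x)\<^sup>2) \<le> norm (M * (g x)\<^sup>2)"
        by (simp add: abs_mult mult_right_mono)
    qed
  qed
  show "set_integrable lborel {0..T} (\<lambda>x. b (u x))"
    unfolding set_integrable_def by (rule borel_integrable_compact[OF _ bu]) simp
qed

lemma FT_has_integral:
  fixes a b u :: "real \<Rightarrow> real"
  assumes "H10 T v g" and "continuous_on UNIV a" "continuous_on UNIV b"
    and "continuous_on {0..T} u"
  shows "((\<lambda>x. a (u x) * (g x)\<^sup>2 + b (u x)) has_integral FT a b T u g) {0..T}"
proof -
  have L: "set_integrable lborel {0..T} (\<lambda>x. a (u x) * (g x)\<^sup>2 + b (u x))"
    using Lagrangian_set_integrable[OF assms] by (rule set_integral_add(1))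
  show ?thesis
    unfolding FT_def set_borel_integral_eq_integral(2)[OF L]
    using set_borel_integral_eq_integral(1)[OF L] by (rule integrable_integral)
qed

lemma integral_nonneg_imp_nonneg_point:
  fixes u :: "real \<Rightarrow> real"
  assumes "c < d" and "continuous_on {c..d} u" and "0 \<le> integral {c..d} u"
  obtains y where "y \<in> {c..d}" and "0 \<le> u y"
proof -
  obtain y where y: "y \<in> {c..d}" and max: "\<forall>x\<in>{c..d}. u x \<le> u y"
    using continuous_attains_sup[OF compact_Icc _ assms(2)] assms(1) by auto
  have "integral {c..d} u \<le> integral {c..d} (\<lambda>_. u y)"
    using max by (intro integral_le integrable_continuous_interval assms(2)) auto
  then have "0 \<le> (d - c) * u y"
    using assms(1,3) by simp
  then show thesis
    using that y assms(1) by (simp add: zero_le_mult_iff)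
qed

lemma compact_sublevel_superlevel_Icc:
  fixes u :: "real \<Rightarrow> real"
  assumes "continuous_on {c..d} u"
  shows "compact {r\<in>{c..d}. u r \<le> t}" and "compact {r\<in>{c..d}. t \<le> u r}"
proof -
  have "closed ({c..d} \<inter> u -` {..t})" "closed ({c..d} \<inter> u -` {t..})"
    using assms by (auto intro: continuous_closed_preimage)
  moreover have "{r\<in>{c..d}. u r \<le> t} = {c..d} \<inter> u -` {..t}"
    "{r\<in>{c..d}. t \<le> u r} = {c..d} \<inter> u -` {t..}" by auto
  ultimately show "compact {r\<in>{c..d}. u r \<le> t}" "compact {r\<in>{c..d}. t \<le> u r}"
    by (simp_all add: compact_eq_bounded_closed bounded_Int)
qed

lemma downcrossing_interval:
  fixes u :: "real \<Rightarrow> real"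
  assumes "y \<le> z" and cont: "continuous_on {y..z} u" and "hi \<le> u y" and "u z \<le> lo" and "lo < hi"
  obtains p q where "y \<le> p" "p \<le> q" "q \<le> z" "u p = hi" "u q = lo"
    and "\<forall>r\<in>{p..q}. lo \<le> u r \<and> u r \<le> hi"
proof -
  obtain p where p: "p \<in> {y..z}" "hi \<le> u p" and p_last: "\<forall>r\<in>{y..z}. hi \<le> u r \<longrightarrow> r \<le> p"
    using compact_attains_sup[OF compact_sublevel_superlevel_Icc(2)[OF cont, of hi]] assms(1,3) by fastforce
  have cont_p: "continuous_on {p..z} u"
    using continuous_on_subset[OF cont] p by auto
  obtain q where q: "q \<in> {p..z}" "u q \<le> lo" and q_first: "\<forall>r\<in>{p..z}. u r \<le> lo \<longrightarrow> q \<le> r"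
    using compact_attains_inf[OF compact_sublevel_superlevel_Icc(1)[OF cont_p, of lo]] p assms(4) by fastforce
  obtain x where "x \<in> {p..z}" "u x = hi"
    using IVT2'[of u z hi p] p assms(4,5) cont_p by auto
  then have up: "u p = hi"
    using p p_last by force
  obtain x' where "x' \<in> {p..q}" "u x' = lo"
    using IVT2'[of u q lo p] q up assms(5) continuous_on_subset[OF cont_p, of "{p..q}"] by auto
  then have uq: "u q = lo"
    using q q_first by force
  have "lo \<le> u r \<and> u r \<le> hi" if r: "r \<in> {p..q}" for r
  proof -
    have "r \<in> {y..z}"
      using r p q by auto
    then have "u r \<le> hi"
      using r p_last up by (metis atLeastAtMost_iff linorder_not_le order_antisym_conv order_less_imp_le)
    moreover have "r \<in> {p..z}"
      using r q by auto
    then have "lo \<le> u r"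
      using r q_first uq by (metis atLeastAtMost_iff linorder_not_le order_antisym_conv order_less_imp_le)
    ultimately show ?thesis by simp
  qed
  then show thesis
    using that p q up uq by auto
qed

lemma crossing_interval:
  fixes u :: "real \<Rightarrow> real"
  assumes cont: "continuous_on {c..d} u" and "y \<in> {c..d}" "z \<in> {c..d}"
    and "hi \<le> u y" and "u z \<le> lo" and "lo < hi"
  obtains p q where "c \<le> p" "p < q" "q \<le> d" "\<bar>u q - u p\<bar> = hi - lo"
    and "\<forall>r\<in>{p..q}. lo \<le> u r \<and> u r \<le> hi"
proof (cases "y \<le> z")
  case True
  then obtain p q where "y \<le> p" "p \<le> q" "q \<le> z" "u p = hi" "u q = lo"
      "\<forall>r\<in>{p..q}. lo \<le> u r \<and> u r \<le> hi"
    using downcrossing_interval[of y z u hi lo] continuous_on_subset[OF cont] assms by auto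
  moreover from this assms have "p \<noteq> q" by auto
  ultimately show thesis
    using assms by (intro that[of p q]) auto
next
  case False
  have "continuous_on {z..y} (\<lambda>x. - u x)"
    using continuous_on_subset[OF cont] assms(2,3) by (auto intro: continuous_intros)
  then obtain p q where "z \<le> p" "p \<le> q" "q \<le> y" "- u p = - lo" "- u q = - hi"
      "\<forall>r\<in>{p..q}. - hi \<le> - u r \<and> - u r \<le> - lo"
    using downcrossing_interval[of z y "\<lambda>x. - u x" "- lo" "- hi"] False assms by auto
  moreover from this assms have "p \<noteq> q" by auto
  ultimately show thesis
    using assms by (intro that[of p q]) auto
qed

lemma power2_integral_le:
  fixes g :: "real \<Rightarrow> real"
  assumes "p \<le> q" and g: "g integrable_on {p..q}" and g2: "(\<lambda>x. (g x)\<^sup>2) integrable_on {p..q}"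
  shows "(integral {p..q} g)\<^sup>2 \<le> (q - p) * integral {p..q} (\<lambda>x. (g x)\<^sup>2)"
proof (cases "p = q")
  case False
  define L I G where "L = q - p" and "I = integral {p..q} g"
    and "G = integral {p..q} (\<lambda>x. (g x)\<^sup>2)"
  have L: "0 < L"
    using assms(1) False by (simp add: L_def)
  have expand: "(L * g x - I)\<^sup>2 = L\<^sup>2 * (g x)\<^sup>2 - (2 * L * I) * g x + I\<^sup>2" for x
    by (simp add: power2_eq_square algebra_simps)
  have "((\<lambda>x. L\<^sup>2 * (g x)\<^sup>2 - (2 * L * I) * g x + I\<^sup>2) has_integral
      L\<^sup>2 * G - (2 * L * I) * I + L * I\<^sup>2) {p..q}"
    using has_integral_const_real[of "I\<^sup>2" p q] assms(1) g g2
    unfolding G_def I_def L_def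
    by (intro has_integral_add has_integral_diff has_integral_mult_right integrable_integral) auto
  then have "0 \<le> L\<^sup>2 * G - (2 * L * I) * I + L * I\<^sup>2"
    by (rule has_integral_nonneg) (simp only: expand[symmetric] zero_le_power2)
  then have "0 \<le> L * (L * G - I\<^sup>2)"
    by (simp add: power2_eq_square algebra_simps)
  then show ?thesis
    using L by (simp add: zero_le_mult_iff G_def I_def L_def)
qed simp

lemma integral_ge_unit_windows:
  fixes f :: "real \<Rightarrow> real"
  assumes "0 \<le> T" and f: "f integrable_on {0..T}" and f_ge: "\<forall>x\<in>{0..T}. m \<le> f x"
    and windows: "\<forall>j::nat. real j + 1 \<le> T \<longrightarrow> m + \<eta> \<le> integral {real j..real j + 1} f"
    and "0 \<le> \<eta>"
  shows "m * T + \<eta> * (T - 1) \<le> integral {0..T} f"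
proof -
  have partial: "real n * (m + \<eta>) \<le> integral {0..real n} f" if "real n \<le> T" for n :: nat
    using that
  proof (induction n)
    case (Suc n)
    have "f integrable_on {0..real n + 1}"
      using f by (rule integrable_on_subinterval) (use Suc.prems in auto)
    then have "integral {0..real n} f + integral {real n..real n + 1} f = integral {0..real n + 1} f"
      by (intro Henstock_Kurzweil_Integration.integral_combine) auto
    moreover have "m + \<eta> \<le> integral {real n..real n + 1} f"
      using windows Suc.prems by auto
    ultimately show ?case
      using Suc by (simp add: algebra_simps)
  qed simp
  define N where "N = nat \<lfloor>T\<rfloor>"
  have N: "real N \<le> T" "T - 1 \<le> real N"
    unfolding N_def using assms(1) by linarith+
  have "integral {0..real N} f + integral {real N..T} f = integral {0..T} f"
    using N f by (intro Henstock_Kurzweil_Integration.integral_combine) auto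
  moreover have "m * (T - real N) \<le> integral {real N..T} f"
    using integral_le[of "\<lambda>_. m" "{real N..T}" f] f_ge N integrable_on_subinterval[OF f]
    by (simp add: integrable_const_ivl mult.commute)
  moreover have "\<eta> * (T - 1) \<le> \<eta> * real N"
    using N assms(5) by (simp add: mult_left_mono)
  ultimately show ?thesis
    using partial[OF N(1)] by (simp add: algebra_simps)
qed

context
  fixes a b :: "real \<Rightarrow> real" and ubar m \<alpha> \<eta> :: real
  assumes a_cont: "continuous_on UNIV a" and b_cont: "continuous_on UNIV b"
    and a_nonneg: "\<forall>y. 0 \<le> a y" and b_ge: "\<forall>y. m \<le> b y"
    and "ubar < 0" and "0 \<le> \<alpha>" and a_ge: "\<forall>y\<in>{ubar..0}. \<alpha> \<le> a y"
    and "0 \<le> \<eta>" and gap_a: "\<eta> \<le> \<alpha> * ubar\<^sup>2" and gap_b: "\<forall>y\<ge>ubar. m + \<eta> \<le> b y"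
begin

lemma Lagrangian_window_ge:
  assumes H: "H10 T v g" and u: "\<forall>x\<in>{0..T}. u x = 1 + v x" and "0 \<le> c" "c + 1 \<le> T"
    and avg: "0 \<le> (LINT s:{c..c+1}|lborel. u s)"
  shows "m + \<eta> \<le> integral {c..c+1} (\<lambda>x. a (u x) * (g x)\<^sup>2 + b (u x))"
proof -
  have win: "{c..c+1} \<subseteq> {0..T}"
    using assms(3,4) by auto
  have u_cont: "continuous_on {0..T} u"
    using H u by (rule H10_continuous_on_shift)
  then have cont: "continuous_on {c..c+1} u"
    using continuous_on_subset win by blast
  have diff: "u q - u p = integral {p..q} g" if "c \<le> p" "p \<le> q" "q \<le> c + 1" for p q
    using H10_diff_eq_integral[OF H, of p q] u that assms(3,4) by auto
  have g: "g integrable_on {c..c+1}" and g2: "(\<lambda>x. (g x)\<^sup>2) integrable_on {c..c+1}"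
    using H10_integrable_on[OF H] win by (auto intro: integrable_on_subinterval)
  note L = Lagrangian_set_integrable[OF H a_cont b_cont u_cont,
      THEN set_borel_integral_eq_integral(1), THEN integrable_on_subinterval, OF win]
  define A where "A = integral {c..c+1} (\<lambda>x. a (u x) * (g x)\<^sup>2)"
  define B where "B = integral {c..c+1} (\<lambda>x. b (u x))"
  have split: "integral {c..c+1} (\<lambda>x. a (u x) * (g x)\<^sup>2 + b (u x)) = A + B"
    unfolding A_def B_def using L by (rule integral_add)
  have "0 \<le> A"
    unfolding A_def using L(1) a_nonneg by (intro integral_nonneg) auto
  have "m \<le> B"
    unfolding B_def using integral_le[of "\<lambda>_. m" "{c..c+1}" "\<lambda>x. b (u x)"] L(2) b_ge by auto
  show ?thesis
  proof (cases "\<forall>x\<in>{c..c+1}. ubar \<le> u x")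
    case True
    then have "m + \<eta> \<le> B"
      unfolding B_def using integral_le[of "\<lambda>_. m + \<eta>" "{c..c+1}" "\<lambda>x. b (u x)"] L(2) gap_b
      by auto
    then show ?thesis
      using split \<open>0 \<le> A\<close> by linarith
  next
    case False
    then obtain z where z: "z \<in> {c..c+1}" "u z \<le> ubar"
      by force
    have "0 \<le> integral {c..c+1} u"
      using avg set_borel_integral_eq_integral(2)[of "{c..c+1}" u] borel_integrable_compact[OF _ cont]
      by (simp add: set_integrable_def)
    then obtain y where y: "y \<in> {c..c+1}" "0 \<le> u y"
      using integral_nonneg_imp_nonneg_point[OF _ cont] by auto
    obtain p q where pq: "c \<le> p" "p < q" "q \<le> c + 1" "\<bar>u q - u p\<bar> = 0 - ubar"
      and range: "\<forall>r\<in>{p..q}. ubar \<le> u r \<and> u r \<le> 0"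
      using crossing_interval[OF cont y(1) z(1) y(2) z(2) \<open>ubar < 0\<close>] by blast
    have sub: "{p..q} \<subseteq> {c..c+1}"
      using pq by auto
    have g2_pq: "(\<lambda>x. (g x)\<^sup>2) integrable_on {p..q}"
      using g2 sub by (rule integrable_on_subinterval)
    have g_pq: "g integrable_on {p..q}"
      using g sub by (rule integrable_on_subinterval)
    have "\<bar>integral {p..q} g\<bar> = - ubar"
      using pq diff[of p q] by simp
    then have "\<alpha> * ubar\<^sup>2 = \<alpha> * (integral {p..q} g)\<^sup>2"
      by (metis power2_abs power2_minus)
    also have "\<dots> \<le> \<alpha> * ((q - p) * integral {p..q} (\<lambda>x. (g x)\<^sup>2))"
      using power2_integral_le[OF _ g_pq g2_pq] pq \<open>0 \<le> \<alpha>\<close> by (simp add: mult_left_mono)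
    also have "\<dots> \<le> \<alpha> * integral {p..q} (\<lambda>x. (g x)\<^sup>2)"
      using pq \<open>0 \<le> \<alpha>\<close> integral_nonneg[OF g2_pq]
      by (intro mult_left_mono mult_left_le_one_le) auto
    also have "\<dots> = integral {p..q} (\<lambda>x. \<alpha> * (g x)\<^sup>2)"
      by simp
    also have "\<dots> \<le> integral {p..q} (\<lambda>x. a (u x) * (g x)\<^sup>2)"
      using range a_ge g2_pq
      by (intro integral_le integrable_on_subinterval[OF L(1) sub] integrable_on_mult_right mult_right_mono)
        auto
    also have "\<dots> \<le> A"
      unfolding A_def using L(1) sub a_nonneg
      by (intro integral_subset_le integrable_on_subinterval[OF L(1) sub]) auto
    finally show ?thesis
      using split gap_a \<open>m \<le> B\<close> by linarith
  qed
qed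

lemma FT_ge_if_window_averages_nonneg:
  assumes H: "H10 T v g" and u: "\<forall>x\<in>{0..T}. u x = 1 + v x" and "0 \<le> T"
    and avg: "\<forall>x\<in>{0..T-1}. 0 \<le> (LINT s:{x..x+1}|lborel. u s)"
  shows "m * T + \<eta> * (T - 1) \<le> FT a b T u g"
proof -
  have "continuous_on {0..T} u"
    using H u by (rule H10_continuous_on_shift)
  note FT = FT_has_integral[OF H a_cont b_cont this]
  have "m * T + \<eta> * (T - 1) \<le> integral {0..T} (\<lambda>x. a (u x) * (g x)\<^sup>2 + b (u x))"
  proof (rule integral_ge_unit_windows)
    show "\<forall>x\<in>{0..T}. m \<le> a (u x) * (g x)\<^sup>2 + b (u x)"
      using a_nonneg b_ge by (auto intro!: add_increasing mult_nonneg_nonneg)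
    show "\<forall>j::nat. real j + 1 \<le> T \<longrightarrow>
        m + \<eta> \<le> integral {real j..real j + 1} (\<lambda>x. a (u x) * (g x)\<^sup>2 + b (u x))"
      using Lagrangian_window_ge[OF H u] avg by auto
  qed (use FT assms(3) \<open>0 \<le> \<eta>\<close> in auto)
  then show ?thesis
    using FT by (simp add: integral_unique)
qed

end

lemma energy_gap:
  fixes a b :: "real \<Rightarrow> real"
  assumes "continuous_on {ubar..0} a" and "\<forall>y. 0 < a y" and "ubar < 0"
    and "bdd_below (range b)" and "Inf (range b) < Inf (b ` {ubar..})"
  obtains \<alpha> \<eta> where "0 \<le> \<alpha>" "\<forall>y\<in>{ubar..0}. \<alpha> \<le> a y" "0 < \<eta>" "\<eta> \<le> \<alpha> * ubar\<^sup>2"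
    "\<forall>y\<ge>ubar. Inf (range b) + \<eta> \<le> b y"
proof -
  obtain y0 where "y0 \<in> {ubar..0}" and a_min: "\<forall>y\<in>{ubar..0}. a y0 \<le> a y"
    using continuous_attains_inf[OF compact_Icc _ assms(1)] assms(3) by auto
  have "bdd_below (b ` {ubar..})"
    using assms(4) by (rule bdd_below_mono) auto
  then have b_ge: "\<forall>y\<ge>ubar. Inf (b ` {ubar..}) \<le> b y"
    by (auto intro: cInf_lower)
  show thesis
  proof (rule that[of "a y0" "min (Inf (b ` {ubar..}) - Inf (range b)) (a y0 * ubar\<^sup>2)"])
    show "0 < min (Inf (b ` {ubar..}) - Inf (range b)) (a y0 * ubar\<^sup>2)"
      using assms(2,3,5) by simp
  qed (use a_min assms(2) b_ge in \<open>auto simp: less_imp_le\<close>)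
qed

definition ramp :: "real \<Rightarrow> real \<Rightarrow> real \<Rightarrow> real" where
  "ramp k T x = (if x \<le> 1 then k * x else if x \<le> T - 1 then k else k * (T - x))"

definition ramp_slope :: "real \<Rightarrow> real \<Rightarrow> real \<Rightarrow> real" where
  "ramp_slope k T x = (if x < 1 then k else if x \<le> T - 1 then 0 else - k)"

lemma ramp_between:
  assumes "k \<le> 0" and "x \<in> {0..T}"
  shows "ramp k T x \<in> {k..0}"
  using assms by (auto simp: ramp_def mult_le_0_iff mult_le_cancel_left1 mult_nonpos_nonneg)

lemma set_integrable_ramp_slope: "set_integrable lborel {c..d} (\<lambda>x. (ramp_slope k T x) ^ n)"
proof (rule set_integrable_bounded_Icc)
  show "(\<lambda>x. (ramp_slope k T x) ^ n) \<in> borel_measurable borel"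
    unfolding ramp_slope_def by measurable
  show "\<forall>x\<in>{c..d}. \<bar>(ramp_slope k T x) ^ n\<bar> \<le> \<bar>k\<bar> ^ n"
    by (auto simp: ramp_slope_def power_abs intro: power_mono)
qed

lemma integral_ramp_slope:
  assumes "2 \<le> T" and "x \<in> {0..T}"
  shows "integral {0..x} (ramp_slope k T) = ramp k T x"
proof -
  have int: "ramp_slope k T integrable_on {c..d}" for c d
    using set_borel_integral_eq_integral(1)[OF set_integrable_ramp_slope[of c d k T 1]] by simp
  have up: "integral {0..x} (ramp_slope k T) = k * x" if "x \<in> {0..1}" for x
  proof -
    have "integral {0..x} (ramp_slope k T) = integral {0..x} (\<lambda>_. k)"
      using that by (intro integral_spike[of "{1}"]) (auto simp: ramp_slope_def)
    then show ?thesis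
      using that by simp
  qed
  have flat: "integral {0..x} (ramp_slope k T) = k" if "x \<in> {1..T-1}" for x
  proof -
    have "integral {0..1} (ramp_slope k T) + integral {1..x} (ramp_slope k T)
        = integral {0..x} (ramp_slope k T)"
      using that by (intro Henstock_Kurzweil_Integration.integral_combine int) auto
    moreover have "integral {1..x} (ramp_slope k T) = integral {1..x} (\<lambda>_. 0)"
      using that by (intro integral_cong) (auto simp: ramp_slope_def)
    ultimately show ?thesis
      using up[of 1] by simp
  qed
  have down: "integral {0..x} (ramp_slope k T) = k * (T - x)" if "x \<in> {T-1..T}" for x
  proof -
    have "integral {0..T-1} (ramp_slope k T) + integral {T-1..x} (ramp_slope k T)
        = integral {0..x} (ramp_slope k T)"
      using that assms(1) by (intro Henstock_Kurzweil_Integration.integral_combine int) auto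
    moreover have "integral {T-1..x} (ramp_slope k T) = integral {T-1..x} (\<lambda>_. - k)"
      using that assms(1) by (intro integral_spike[of "{T-1}"]) (auto simp: ramp_slope_def)
    ultimately show ?thesis
      using flat[of "T-1"] that assms(1) by (simp add: algebra_simps)
  qed
  show ?thesis
    using up flat down assms by (auto simp: ramp_def)
qed

lemma H10_ramp:
  assumes "2 \<le> T"
  shows "H10 T (ramp k T) (ramp_slope k T)"
  unfolding H10_def
proof (intro conjI ballI)
  show "ramp_slope k T \<in> borel_measurable lborel"
    unfolding ramp_slope_def by measurable
  show "set_integrable lborel {0..T} (ramp_slope k T)"
    using set_integrable_ramp_slope[of 0 T k T 1] by simp
  show "set_integrable lborel {0..T} (\<lambda>x. (ramp_slope k T x)\<^sup>2)"
    by (rule set_integrable_ramp_slope)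
  show "ramp k T x = (LINT s:{0..x}|lborel. ramp_slope k T s)" if "x \<in> {0..T}" for x
    using integral_ramp_slope[OF assms that] set_integrable_ramp_slope[of 0 x k T 1]
      set_borel_integral_eq_integral(2) by fastforce
  show "ramp k T T = 0"
    using assms by (simp add: ramp_def)
qed

lemma FT_ramp_le:
  fixes a b :: "real \<Rightarrow> real"
  assumes a_cont: "continuous_on UNIV a" and b_cont: "continuous_on UNIV b" and "k \<le> 0"
  obtains C where
    "\<And>T. 2 \<le> T \<Longrightarrow> FT a b T (\<lambda>x. 1 + ramp k T x) (ramp_slope k T) \<le> C + b (1 + k) * (T - 2)"
proof -
  have "continuous_on {1+k..1} (\<lambda>y. \<bar>a y\<bar> + \<bar>b y\<bar>)"
    using continuous_on_subset[OF a_cont] continuous_on_subset[OF b_cont]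
    by (intro continuous_intros) auto
  then have "bounded ((\<lambda>y. \<bar>a y\<bar> + \<bar>b y\<bar>) ` {1+k..1})"
    by (intro compact_imp_bounded compact_continuous_image) auto
  then obtain M where M: "\<forall>y\<in>{1+k..1}. \<bar>a y\<bar> + \<bar>b y\<bar> \<le> M"
    unfolding bounded_real by force
  show thesis
  proof (rule that[of "2 * M * (k\<^sup>2 + 1)"])
    fix T :: real assume T: "2 \<le> T"
    define f where "f x = a (1 + ramp k T x) * (ramp_slope k T x)\<^sup>2 + b (1 + ramp k T x)" for x
    have "(f has_integral FT a b T (\<lambda>x. 1 + ramp k T x) (ramp_slope k T)) {0..T}"
      unfolding f_def using H10_ramp[OF T] a_cont b_cont
      by (intro FT_has_integral H10_continuous_on_shift) auto
    then have FT: "FT a b T (\<lambda>x. 1 + ramp k T x) (ramp_slope k T) = integral {0..T} f"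
      and f: "f integrable_on {0..T}"
      by (auto simp: integral_unique)
    have f_le: "f x \<le> M * (k\<^sup>2 + 1)" if "x \<in> {0..T}" for x
    proof -
      have "\<bar>a (1 + ramp k T x)\<bar> + \<bar>b (1 + ramp k T x)\<bar> \<le> M"
        using M ramp_between[OF assms(3) that] by auto
      then have ab: "\<bar>a (1 + ramp k T x)\<bar> \<le> M" "\<bar>b (1 + ramp k T x)\<bar> \<le> M"
        by linarith+
      have "(ramp_slope k T x)\<^sup>2 \<le> k\<^sup>2"
        by (simp add: ramp_slope_def)
      then have "a (1 + ramp k T x) * (ramp_slope k T x)\<^sup>2 \<le> M * k\<^sup>2"
        using ab(1) by (metis abs_le_D1 abs_ge_zero mult_mono order.trans zero_le_power2
            abs_mult_self_eq power2_eq_square)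
      then show ?thesis
        unfolding f_def using ab(2) by (simp add: algebra_simps)
    qed
    have ends: "integral {c..c+1} f \<le> M * (k\<^sup>2 + 1)" if "c \<in> {0, T - 1}" for c
      using that T integral_le[of f "{c..c+1}" "\<lambda>_. M * (k\<^sup>2 + 1)"] f_le
        integrable_on_subinterval[OF f, of c "c+1"] by (auto simp: integrable_const_ivl)
    have "integral {1..T-1} f = integral {1..T-1} (\<lambda>_. b (1 + k))"
      by (intro integral_cong) (auto simp: f_def ramp_def ramp_slope_def)
    then have mid: "integral {1..T-1} f = b (1 + k) * (T - 2)"
      using T by simp
    have "integral {0..1} f + integral {1..T-1} f + integral {T-1..T} f = integral {0..T} f"
      using T f by (simp add: Henstock_Kurzweil_Integration.integral_combine integrable_on_subinterval)
    then show "FT a b T (\<lambda>x. 1 + ramp k T x) (ramp_slope k T) \<le> 2 * M * (k\<^sup>2 + 1) + b (1 + k) * (T - 2)"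
      using FT ends[of 0] ends[of "T - 1"] mid by simp
  qed
qed

lemma eventually_linear_less:
  fixes c d e f :: real
  assumes "c < d"
  shows "\<forall>\<^sub>F x in at_top. c * x + e < d * x + f"
  using eventually_gt_at_top[of "(e - f) / (d - c)"]
proof (rule eventually_mono)
  fix x assume "(e - f) / (d - c) < x"
  then show "c * x + e < d * x + f"
    using assms by (simp add: field_simps)
qed

theorem mainTheorem3:
  fixes a b :: "real \<Rightarrow> real" and ubar :: real and uT :: "real \<Rightarrow> real \<Rightarrow> real"
  assumes "a C1_differentiable_on UNIV" and "b C1_differentiable_on UNIV"
    and "\<forall>u. a u > 0"
    and "ubar < 0"
    and "bdd_below (range b)"
    and "Inf (range b) < Inf (b ` {ubar..})"
    and "\<forall>T>0. is_minimizer a b T (uT T)"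
  shows "\<forall>\<^sub>F T in at_top. \<exists>x\<in>{0..T-1}. (LINT s:{x..x+1}|lborel. uT T s) < 0"
proof -
  define m where "m = Inf (range b)"
  have a_cont: "continuous_on UNIV a" and b_cont: "continuous_on UNIV b"
    using assms(1,2) by (auto intro: C1_differentiable_imp_continuous_on)
  have b_ge: "\<forall>y. m \<le> b y"
    unfolding m_def using assms(5) by (auto intro: cInf_lower)
  obtain \<alpha> \<eta> where \<alpha>: "0 \<le> \<alpha>" "\<forall>y\<in>{ubar..0}. \<alpha> \<le> a y"
    and \<eta>: "0 < \<eta>" "\<eta> \<le> \<alpha> * ubar\<^sup>2" "\<forall>y\<ge>ubar. m + \<eta> \<le> b y"
    using energy_gap[OF continuous_on_subset[OF a_cont] assms(3-6)] unfolding m_def by blast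
  obtain u0 where u0: "b u0 < m + \<eta>"
    using cInf_lessD[of "range b" "m + \<eta>"] \<eta>(1) unfolding m_def by auto
  then have "u0 < ubar"
    using \<eta>(3) by (meson linorder_not_le order.strict_trans1)
  then obtain C where C: "\<And>T. 2 \<le> T \<Longrightarrow>
      FT a b T (\<lambda>x. 1 + ramp (u0 - 1) T x) (ramp_slope (u0 - 1) T) \<le> C + b u0 * (T - 2)"
    using FT_ramp_le[OF a_cont b_cont, of "u0 - 1"] assms(4) by auto
  have "\<forall>\<^sub>F T in at_top. b u0 * T + (C - 2 * b u0) < (m + \<eta>) * T - \<eta>"
    using eventually_linear_less[of "b u0" "m + \<eta>" "C - 2 * b u0" "- \<eta>"] u0 by simp
  with eventually_ge_at_top[of 2] show ?thesis
  proof eventually_elim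
    case (elim T)
    have "is_minimizer a b T (uT T)"
      using assms(7) elim by simp
    then obtain v g where H: "H10 T v g" and u: "\<forall>x\<in>{0..T}. uT T x = 1 + v x"
      and minimal: "\<forall>w h. H10 T w h \<longrightarrow> FT a b T (uT T) g \<le> FT a b T (\<lambda>x. 1 + w x) h"
      unfolding is_minimizer_def by blast
    have "FT a b T (uT T) g \<le> FT a b T (\<lambda>x. 1 + ramp (u0 - 1) T x) (ramp_slope (u0 - 1) T)"
      using minimal H10_ramp elim by blast
    then have "FT a b T (uT T) g < m * T + \<eta> * (T - 1)"
      using C[of T] elim by (simp add: algebra_simps)
    then show ?case
      using FT_ge_if_window_averages_nonneg[OF a_cont b_cont _ b_ge assms(4) \<alpha> _ \<eta>(2,3) H u]
        assms(3) \<eta>(1) elim by (force simp: less_imp_le not_less)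
  qed
qed

end
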